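(* Let $f\colon K\to R$ be a homomorphism of (nonunital) rings, and assume that $KR\subset RK$ in $R$ (for example, $RK=R$). Then (a) any right $R$-module that is t-unital as a right $K$-module is also t-unital as a right $R$-module; (b) any left $R$-module that is c-unital as a left $K$-module is also c-unital as a left $R$-module. In particular, if the ring $R$ is commutative, then (a) and (b) hold for any homomorphism $f$.
   Context: Rings are associative, not necessarily unital; modules are not assumed unital. $KR$ denotes the additive subgroup of $R$ generated by products $f(k)r$, and $RK$ the subgroup generated by $rf(k)$, for $k\in K$, $r\in R$; $R$-modules are $K$-modules via $f$. A right module $N$ over a ring $S$ is t-unital if $N\otimes_S S\to N$, $n\otimes s\mapsto ns$, is an isomorphism; a left $S$-module $P$ is c-unital if $P\to\mathrm{Hom}_S(S,P)$, $p\mapsto(s\mapsto sp)$, is an isomorphism (with $\mathrm{Hom}_S$ denoting left $S$-module homomorphisms). *)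

theory Defs
  imports Main "HOL-Library.Poly_Mapping"
begin

definition ring_hom :: "('k::ring \<Rightarrow> 'r::ring) \<Rightarrow> bool" where
  "ring_hom f \<longleftrightarrow> (\<forall>a b. f (a + b) = f a + f b) \<and> (\<forall>a b. f (a * b) = f a * f b)"

inductive_set subgroup_gen :: "'a::ab_group_add set \<Rightarrow> 'a set" for G where
  zero: "0 \<in> subgroup_gen G"
| gen: "g \<in> G \<Longrightarrow> g \<in> subgroup_gen G"
| diff: "a \<in> subgroup_gen G \<Longrightarrow> b \<in> subgroup_gen G \<Longrightarrow> a - b \<in> subgroup_gen G"

definition KR :: "('k::ring \<Rightarrow> 'r::ring) \<Rightarrow> 'r set" where
  "KR f = subgroup_gen {f k * r | k r. True}"

definition RK :: "('k::ring \<Rightarrow> 'r::ring) \<Rightarrow> 'r set" where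
  "RK f = subgroup_gen {r * f k | r k. True}"

definition right_module :: "('n::ab_group_add \<Rightarrow> 's::ring \<Rightarrow> 'n) \<Rightarrow> bool" where
  "right_module act \<longleftrightarrow>
     (\<forall>n n' s. act (n + n') s = act n s + act n' s) \<and>
     (\<forall>n s s'. act n (s + s') = act n s + act n s') \<and>
     (\<forall>n s s'. act (act n s) s' = act n (s * s'))"

definition left_module :: "('s::ring \<Rightarrow> 'p::ab_group_add \<Rightarrow> 'p) \<Rightarrow> bool" where
  "left_module act \<longleftrightarrow>
     (\<forall>s p p'. act s (p + p') = act s p + act s p') \<and>
     (\<forall>s s' p. act (s + s') p = act s p + act s' p) \<and>
     (\<forall>s s' p. act s (act s' p) = act (s * s') p)"

definition zsmult :: "int \<Rightarrow> 'a::ab_group_add \<Rightarrow> 'a" where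
  "zsmult k x = (if 0 \<le> k then (\<Sum>_<nat k. x) else - (\<Sum>_<nat (- k). x))"

text \<open>Tensor product N \<otimes>_S S, written out: the free abelian group on N \<times> S
  (finitely supported integer-valued functions) modulo the subgroup generated by the
  balanced-bilinearity relations.\<close>
definition tensor_rels :: "('n::ab_group_add \<Rightarrow> 's::ring \<Rightarrow> 'n) \<Rightarrow> (('n \<times> 's) \<Rightarrow>\<^sub>0 int) set" where
  "tensor_rels act =
     {Poly_Mapping.single (n + n', s) 1 - Poly_Mapping.single (n, s) 1 - Poly_Mapping.single (n', s) 1
        | n n' s. True} \<union>
     {Poly_Mapping.single (n, s + s') 1 - Poly_Mapping.single (n, s) 1 - Poly_Mapping.single (n, s') 1
        | n s s'. True} \<union>
     {Poly_Mapping.single (act n s', s) 1 - Poly_Mapping.single (n, s' * s) 1 | n s s'. True}"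

text \<open>The map on formal sums inducing N \<otimes>_S S -> N, n \<otimes> s \<mapsto> n s.\<close>
definition tensor_eval :: "('n::ab_group_add \<Rightarrow> 's::ring \<Rightarrow> 'n) \<Rightarrow> (('n \<times> 's) \<Rightarrow>\<^sub>0 int) \<Rightarrow> 'n" where
  "tensor_eval act x = (\<Sum>q\<in>Poly_Mapping.keys x. zsmult (Poly_Mapping.lookup x q) (act (fst q) (snd q)))"

text \<open>t-unital: the induced map N \<otimes>_S S -> N (from the quotient) is bijective, i.e. the map on
  formal sums is surjective and its kernel is exactly (contained in) the relation subgroup.\<close>
definition t_unital :: "('n::ab_group_add \<Rightarrow> 's::ring \<Rightarrow> 'n) \<Rightarrow> bool" where
  "t_unital act \<longleftrightarrow>
     surj (tensor_eval act) \<and>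
     (\<forall>x. tensor_eval act x = 0 \<longrightarrow> x \<in> subgroup_gen (tensor_rels act))"

definition left_hom_from_ring :: "('s::ring \<Rightarrow> 'p::ab_group_add \<Rightarrow> 'p) \<Rightarrow> ('s \<Rightarrow> 'p) \<Rightarrow> bool" where
  "left_hom_from_ring act g \<longleftrightarrow>
     (\<forall>s t. g (s + t) = g s + g t) \<and> (\<forall>s t. g (s * t) = act s (g t))"

text \<open>c-unital: P -> Hom_S(S,P), p \<mapsto> (s \<mapsto> s p), is bijective.\<close>
definition c_unital :: "('s::ring \<Rightarrow> 'p::ab_group_add \<Rightarrow> 'p) \<Rightarrow> bool" where
  "c_unital act \<longleftrightarrow>
     inj (\<lambda>p. \<lambda>s. act s p) \<and>
     (\<forall>g. left_hom_from_ring act g \<longrightarrow> (\<exists>p. \<forall>s. g s = act s p))"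

end

theory Submission
  imports Defs HOL.Modules
begin

text \<open>
  (a) The map N \<otimes>_K K \<rightarrow> N \<otimes>_R R, n \<otimes> k \<mapsto> n \<otimes> f k, is onto: write n = \<Sum> m_i f k_i, so that
  m f k \<otimes> r = m \<otimes> f k r, and f k r \<in> KR \<subseteq> RK is a sum of terms r' f k' with
  m \<otimes> r' f k' = m r' \<otimes> f k'. Its composite with N \<otimes>_R R \<rightarrow> N is the isomorphism N \<otimes>_K K \<rightarrow> N,
  so N \<otimes>_R R \<rightarrow> N is an isomorphism as well.

  (b) Given an R-linear g : R \<rightarrow> P, the K-linear map g \<circ> f is s \<mapsto> f s p for some p. Then
  h = g - (\<lambda>s. s p) is R-linear and kills f K, hence kills RK and thus KR, so f k (h r) = h (f k r) = 0
  for all k, which forces h r = 0 by injectivity of P \<rightarrow> Hom_K(K, P).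
\<close>

lemma subgroup_gen_uminus: "a \<in> subgroup_gen G \<Longrightarrow> - a \<in> subgroup_gen G"
  using subgroup_gen.diff[OF subgroup_gen.zero, of a G] by simp

lemma subgroup_gen_add: "a \<in> subgroup_gen G \<Longrightarrow> b \<in> subgroup_gen G \<Longrightarrow> a + b \<in> subgroup_gen G"
  using subgroup_gen.diff[of a G "- b"] subgroup_gen_uminus[of b G] by simp

lemma subgroup_gen_least:
  assumes "0 \<in> W" "\<And>a b. a \<in> W \<Longrightarrow> b \<in> W \<Longrightarrow> a - b \<in> W" "G \<subseteq> W"
  shows "subgroup_gen G \<subseteq> W"
proof
  fix x assume "x \<in> subgroup_gen G"
  then show "x \<in> W" by induct (use assms in auto)
qed

lemma zsmult_0 [simp]: "zsmult 0 x = 0"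
  by (simp add: zsmult_def)

lemma zsmult_1 [simp]: "zsmult 1 x = x"
  by (simp add: zsmult_def)

lemma zsmult_add_one: "zsmult (k + 1) x = zsmult k x + x"
proof -
  consider "0 \<le> k" | "k = -1" | "k < -1" by linarith
  then show ?thesis
  proof cases
    case 1
    then have "nat (k + 1) = Suc (nat k)" by simp
    with 1 show ?thesis by (simp add: zsmult_def)
  next
    case 3
    then have "nat (- k) = Suc (nat (- (k + 1)))" by simp
    with 3 show ?thesis by (simp add: zsmult_def algebra_simps)
  qed (simp add: zsmult_def)
qed

lemma zsmult_add: "zsmult (a + b) x = zsmult a x + zsmult b x"
proof (induction b rule: int_induct[where k = 0])
  case base
  then show ?case by simp
next
  case (step1 i)
  then show ?case
    using zsmult_add_one[of "a + i" x] zsmult_add_one[of i x] by (simp add: add.assoc[symmetric])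
next
  case (step2 i)
  then show ?case
    using zsmult_add_one[of "a + i - 1" x] zsmult_add_one[of "i - 1" x] by (simp add: algebra_simps)
qed

lemma additive_tensor_eval: "additive (tensor_eval act)"
  by unfold_locales
    (unfold tensor_eval_def, rule setsum_keys_plus_distrib, auto simp: zsmult_add)

lemma tensor_eval_frag_of [simp]: "tensor_eval act (frag_of (n, s)) = act n s"
  by (simp add: tensor_eval_def)

lemma tensor_eval_mem_subgroup_gen: "tensor_eval act x \<in> subgroup_gen {act n s | n s. True}"
  using subset_UNIV
proof (induction x rule: frag_induction)
  case zero
  then show ?case by (simp add: additive.zero[OF additive_tensor_eval] subgroup_gen.zero)
next
  case (one q)
  then show ?case by (cases q) (auto intro: subgroup_gen.gen)
next
  case (diff a b)
  then show ?case by (simp add: additive.diff[OF additive_tensor_eval] subgroup_gen.diff)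
qed

lemma tensor_rel_add_left: "frag_of (n + n', s) - frag_of (n, s) - frag_of (n', s) \<in> tensor_rels act"
  unfolding tensor_rels_def by blast

lemma tensor_rel_add_right: "frag_of (n, s + s') - frag_of (n, s) - frag_of (n, s') \<in> tensor_rels act"
  unfolding tensor_rels_def by blast

lemma tensor_rel_assoc: "frag_of (act n s', s) - frag_of (n, s' * s) \<in> tensor_rels act"
  unfolding tensor_rels_def by blast

lemma tensor_eval_tensor_rels:
  assumes "right_module act" and "x \<in> subgroup_gen (tensor_rels act)"
  shows "tensor_eval act x = 0"
proof -
  interpret additive "tensor_eval act" by (rule additive_tensor_eval)
  have "subgroup_gen (tensor_rels act) \<subseteq> {x. tensor_eval act x = 0}"
    by (rule subgroup_gen_least)
      (use assms(1) in \<open>auto simp: zero diff tensor_rels_def right_module_def\<close>)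
  with assms(2) show ?thesis by blast
qed

lemma frag_of_left_mem_subgroup_gen:
  assumes "tensor_rels act \<subseteq> G"
    and "\<And>m. m \<in> S \<Longrightarrow> frag_of (m, s) \<in> subgroup_gen G"
    and "n \<in> subgroup_gen S"
  shows "frag_of (n, s) \<in> subgroup_gen G"
  using assms(3)
proof induction
  case zero
  have "frag_of (0 + 0, s) - frag_of (0, s) - frag_of (0, s) \<in> subgroup_gen G"
    using assms(1) tensor_rel_add_left by (blast intro: subgroup_gen.gen)
  from subgroup_gen_uminus[OF this] show ?case by simp
next
  case (gen m)
  then show ?case by (rule assms(2))
next
  case (diff a b)
  have "frag_of (a - b + b, s) - frag_of (a - b, s) - frag_of (b, s) \<in> subgroup_gen G"
    using assms(1) tensor_rel_add_left by (blast intro: subgroup_gen.gen)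
  from subgroup_gen.diff[OF subgroup_gen.diff[OF diff.IH] this] show ?case by simp
qed

lemma frag_of_right_mem_subgroup_gen:
  assumes "tensor_rels act \<subseteq> G"
    and "\<And>s. s \<in> S \<Longrightarrow> frag_of (n, s) \<in> subgroup_gen G"
    and "t \<in> subgroup_gen S"
  shows "frag_of (n, t) \<in> subgroup_gen G"
  using assms(3)
proof induction
  case zero
  have "frag_of (n, 0 + 0) - frag_of (n, 0) - frag_of (n, 0) \<in> subgroup_gen G"
    using assms(1) tensor_rel_add_right by (blast intro: subgroup_gen.gen)
  from subgroup_gen_uminus[OF this] show ?case by simp
next
  case (gen s)
  then show ?case by (rule assms(2))
next
  case (diff a b)
  have "frag_of (n, a - b + b) - frag_of (n, a - b) - frag_of (n, b) \<in> subgroup_gen G"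
    using assms(1) tensor_rel_add_right by (blast intro: subgroup_gen.gen)
  from subgroup_gen.diff[OF subgroup_gen.diff[OF diff.IH] this] show ?case by simp
qed

definition tensor_restrict :: "('k \<Rightarrow> 'r) \<Rightarrow> ('n \<times> 'k \<Rightarrow>\<^sub>0 int) \<Rightarrow> ('n \<times> 'r \<Rightarrow>\<^sub>0 int)" where
  "tensor_restrict f = frag_extend (frag_of \<circ> apsnd f)"

lemma tensor_restrict_frag_of [simp]: "tensor_restrict f (frag_of (n, k)) = frag_of (n, f k)"
  by (simp add: tensor_restrict_def)

lemma tensor_restrict_0 [simp]: "tensor_restrict f 0 = 0"
  by (simp add: tensor_restrict_def)

lemma tensor_restrict_diff: "tensor_restrict f (a - b) = tensor_restrict f a - tensor_restrict f b"
  by (simp add: tensor_restrict_def frag_extend_diff)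

lemma tensor_eval_tensor_restrict:
  "tensor_eval act (tensor_restrict f x) = tensor_eval (\<lambda>n k. act n (f k)) x"
  using subset_UNIV
  by (induction x rule: frag_induction)
    (auto simp: tensor_restrict_diff additive.diff[OF additive_tensor_eval]
      additive.zero[OF additive_tensor_eval])

lemma tensor_restrict_tensor_rels:
  assumes "ring_hom f" and "y \<in> subgroup_gen (tensor_rels (\<lambda>n k. act n (f k)))"
  shows "tensor_restrict f y \<in> subgroup_gen (tensor_rels act)"
proof -
  have "tensor_restrict f r \<in> tensor_rels act" if "r \<in> tensor_rels (\<lambda>n k. act n (f k))" for r
    using that[unfolded tensor_rels_def] assms(1)
    by (auto simp: tensor_restrict_diff ring_hom_def
        intro: tensor_rel_add_left tensor_rel_add_right tensor_rel_assoc)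
  then have "subgroup_gen (tensor_rels (\<lambda>n k. act n (f k)))
      \<subseteq> {y. tensor_restrict f y \<in> subgroup_gen (tensor_rels act)}"
    by (intro subgroup_gen_least)
      (auto simp: tensor_restrict_diff intro: subgroup_gen.zero subgroup_gen.diff subgroup_gen.gen)
  with assms(2) show ?thesis by blast
qed

lemma ex_tensor_restrict_congruent:
  assumes "x \<in> subgroup_gen (tensor_rels act \<union> range (tensor_restrict f))"
  shows "\<exists>y. x - tensor_restrict f y \<in> subgroup_gen (tensor_rels act)"
  using assms
proof induction
  case zero
  have "0 - tensor_restrict f 0 \<in> subgroup_gen (tensor_rels act)"
    by (simp add: subgroup_gen.zero)
  then show ?case by blast
next
  case (gen x)
  then show ?case
  proof
    assume "x \<in> tensor_rels act"
    then have "x - tensor_restrict f 0 \<in> subgroup_gen (tensor_rels act)"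
      by (simp add: subgroup_gen.gen)
    then show ?case by blast
  next
    assume "x \<in> range (tensor_restrict f)"
    then obtain y where "x = tensor_restrict f y" by blast
    then have "x - tensor_restrict f y \<in> subgroup_gen (tensor_rels act)"
      by (simp add: subgroup_gen.zero)
    then show ?case by blast
  qed
next
  case (diff a b)
  then obtain ya yb where "a - tensor_restrict f ya \<in> subgroup_gen (tensor_rels act)"
    "b - tensor_restrict f yb \<in> subgroup_gen (tensor_rels act)" by blast
  from subgroup_gen.diff[OF this]
  have "a - b - tensor_restrict f (ya - yb) \<in> subgroup_gen (tensor_rels act)"
    by (simp add: tensor_restrict_diff algebra_simps)
  then show ?case by blast
qed

lemma subgroup_gen_tensor_rels_image_eq_UNIV:
  assumes "KR f \<subseteq> RK f" and "surj (tensor_eval (\<lambda>n k. act n (f k)))"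
  shows "subgroup_gen (tensor_rels act \<union> range (tensor_restrict f)) = UNIV"
proof -
  define G where "G = tensor_rels act \<union> range (tensor_restrict f)"
  have rels: "tensor_rels act \<subseteq> G" by (simp add: G_def)
  have rel_assoc: "frag_of (act n s', s) - frag_of (n, s' * s) \<in> subgroup_gen G" for n s s'
    using rels tensor_rel_assoc by (blast intro: subgroup_gen.gen)
  have image: "frag_of (n, f k) \<in> subgroup_gen G" for n k
    by (rule subgroup_gen.gen) (simp add: G_def rangeI flip: tensor_restrict_frag_of)
  have RK: "frag_of (m, t) \<in> subgroup_gen G" if "t \<in> RK f" for m t
    using rels _ that[unfolded RK_def]
  proof (rule frag_of_right_mem_subgroup_gen)
    fix s assume "s \<in> {r * f k | r k. True}"
    then obtain r k where "s = r * f k" by blast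
    with subgroup_gen.diff[OF image[of "act m r" k] rel_assoc[of m r "f k"]]
    show "frag_of (m, s) \<in> subgroup_gen G" by simp
  qed
  have KR: "frag_of (act m (f k), r) \<in> subgroup_gen G" for m k r
  proof -
    have "f k * r \<in> RK f"
      using assms(1) unfolding KR_def by (blast intro: subgroup_gen.gen)
    from subgroup_gen_add[OF RK[OF this, of m] rel_assoc[of m "f k" r]] show ?thesis by simp
  qed
  have frag_of: "frag_of (n, r) \<in> subgroup_gen G" for n r
  proof (rule frag_of_left_mem_subgroup_gen[OF rels, where S = "{act m (f k) | m k. True}"])
    obtain z where "n = tensor_eval (\<lambda>n k. act n (f k)) z"
      using assms(2) by (auto simp: surj_def)
    then show "n \<in> subgroup_gen {act m (f k) | m k. True}"
      using tensor_eval_mem_subgroup_gen[of "\<lambda>n k. act n (f k)" z] by simp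
  qed (use KR in blast)
  have "x \<in> subgroup_gen G" for x
    using subset_UNIV
  proof (induction x rule: frag_induction)
    case (one q)
    then show ?case using frag_of by (cases q) simp
  qed (auto intro: subgroup_gen.zero subgroup_gen.diff)
  then show ?thesis unfolding G_def[symmetric] by blast
qed

lemma t_unital_of_restrict:
  assumes "ring_hom f" and "KR f \<subseteq> RK f" and "right_module act"
    and "t_unital (\<lambda>n k. act n (f k))"
  shows "t_unital act"
proof -
  let ?actK = "\<lambda>n k. act n (f k)"
  have surjK: "surj (tensor_eval ?actK)"
    and kerK: "\<And>y. tensor_eval ?actK y = 0 \<Longrightarrow> y \<in> subgroup_gen (tensor_rels ?actK)"
    using assms(4) by (auto simp: t_unital_def)
  have "surj (tensor_eval act)"
    unfolding surj_def
  proof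
    fix n
    from surjK obtain z where "n = tensor_eval ?actK z" by (auto simp: surj_def)
    then have "n = tensor_eval act (tensor_restrict f z)" by (simp add: tensor_eval_tensor_restrict)
    then show "\<exists>x. n = tensor_eval act x" ..
  qed
  moreover have "x \<in> subgroup_gen (tensor_rels act)" if "tensor_eval act x = 0" for x
  proof -
    obtain y where y: "x - tensor_restrict f y \<in> subgroup_gen (tensor_rels act)"
      using ex_tensor_restrict_congruent subgroup_gen_tensor_rels_image_eq_UNIV[OF assms(2) surjK] by blast
    have "tensor_eval ?actK y = 0"
      using tensor_eval_tensor_rels[OF assms(3) y] that
      by (simp add: additive.diff[OF additive_tensor_eval] tensor_eval_tensor_restrict)
    then have "tensor_restrict f y \<in> subgroup_gen (tensor_rels act)"
      by (rule tensor_restrict_tensor_rels[OF assms(1) kerK])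
    from subgroup_gen_add[OF y this] show ?thesis by simp
  qed
  ultimately show ?thesis by (simp add: t_unital_def)
qed

lemma additive_left_module_act: "left_module act \<Longrightarrow> additive (act s)"
  by unfold_locales (simp add: left_module_def)

lemma additive_left_hom_from_ring: "left_hom_from_ring act g \<Longrightarrow> additive g"
  by unfold_locales (simp add: left_hom_from_ring_def)

lemma left_hom_from_ring_comp:
  assumes "ring_hom f" and "left_hom_from_ring act g"
  shows "left_hom_from_ring (\<lambda>k p. act (f k) p) (g \<circ> f)"
  using assms by (simp add: left_hom_from_ring_def ring_hom_def)

lemma left_hom_from_ring_diff_act:
  assumes "left_module act" and "left_hom_from_ring act g"
  shows "left_hom_from_ring act (\<lambda>s. g s - act s p)"
proof -
  have "act s (g t - act t p) = act s (g t) - act (s * t) p" for s t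
    using additive.diff[OF additive_left_module_act[OF assms(1)]] assms(1)
    by (simp add: left_module_def)
  with assms show ?thesis
    by (simp add: left_hom_from_ring_def left_module_def algebra_simps)
qed

lemma left_hom_from_ring_vanishes_on_RK:
  assumes "left_module act" and "left_hom_from_ring act h"
    and "\<And>k. h (f k) = 0" and "t \<in> RK f"
  shows "h t = 0"
proof -
  interpret additive h by (rule additive_left_hom_from_ring[OF assms(2)])
  have "h (r * f k) = 0" for r k
    using assms(2,3) additive.zero[OF additive_left_module_act[OF assms(1)]]
    by (simp add: left_hom_from_ring_def)
  then have "RK f \<subseteq> {t. h t = 0}"
    unfolding RK_def by (intro subgroup_gen_least) (auto simp: zero diff)
  with assms(4) show ?thesis by blast
qed

lemma c_unital_of_restrict:
  assumes "ring_hom f" and "KR f \<subseteq> RK f" and "left_module act"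
    and "c_unital (\<lambda>k p. act (f k) p)"
  shows "c_unital act"
proof -
  have injK: "inj (\<lambda>p k. act (f k) p)"
    and homK: "\<And>g. left_hom_from_ring (\<lambda>k p. act (f k) p) g \<Longrightarrow> \<exists>p. \<forall>k. g k = act (f k) p"
    using assms(4) unfolding c_unital_def by auto
  have act_zero: "act s 0 = 0" for s
    by (rule additive.zero[OF additive_left_module_act[OF assms(3)]])
  have "inj (\<lambda>p s. act s p)"
  proof (rule injI)
    fix p q assume "(\<lambda>s. act s p) = (\<lambda>s. act s q)"
    then have "(\<lambda>k. act (f k) p) = (\<lambda>k. act (f k) q)" by (simp add: fun_eq_iff)
    then show "p = q" by (rule injD[OF injK])
  qed
  moreover have "\<exists>p. \<forall>s. g s = act s p" if g: "left_hom_from_ring act g" for g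
  proof -
    obtain p where p: "\<And>k. g (f k) = act (f k) p"
      using homK[OF left_hom_from_ring_comp[OF assms(1) g]] by auto
    define h where "h s = g s - act s p" for s
    have h: "left_hom_from_ring act h"
      unfolding h_def by (rule left_hom_from_ring_diff_act[OF assms(3) g])
    have "h r = 0" for r
    proof (rule injD[OF injK])
      have "h (f k * r) = 0" for k
      proof (rule left_hom_from_ring_vanishes_on_RK[OF assms(3) h])
        show "h (f k) = 0" for k by (simp add: h_def p)
        have "f k * r \<in> KR f" unfolding KR_def by (rule subgroup_gen.gen) blast
        with assms(2) show "f k * r \<in> RK f" ..
      qed
      with h show "(\<lambda>k. act (f k) (h r)) = (\<lambda>k. act (f k) 0)"
        by (simp add: left_hom_from_ring_def act_zero)
    qed
    then show ?thesis by (auto simp: h_def)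
  qed
  ultimately show ?thesis unfolding c_unital_def by blast
qed

lemma KR_subset_RK_of_commutative:
  assumes "\<forall>a b :: 'r::ring. a * b = b * a"
  shows "KR (f :: 'k::ring \<Rightarrow> 'r) \<subseteq> RK f"
proof -
  have "{f k * r | k r. True} = {r * f k | r k. True}" using assms by metis
  then show ?thesis unfolding KR_def RK_def by simp
qed

theorem proposition9p6:
  fixes f :: "'k::ring \<Rightarrow> 'r::ring"
  assumes "ring_hom f"
    and "KR f \<subseteq> RK f \<or> (\<forall>a b :: 'r. a * b = b * a)"
  shows "(\<forall>act :: 'n::ab_group_add \<Rightarrow> 'r \<Rightarrow> 'n.
            right_module act \<and> t_unital (\<lambda>n k. act n (f k)) \<longrightarrow> t_unital act)
       \<and> (\<forall>act :: 'r \<Rightarrow> 'p::ab_group_add \<Rightarrow> 'p.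
            left_module act \<and> c_unital (\<lambda>k p. act (f k) p) \<longrightarrow> c_unital act)"
proof -
  have "KR f \<subseteq> RK f"
    using assms(2) KR_subset_RK_of_commutative by blast
  then show ?thesis
    using t_unital_of_restrict c_unital_of_restrict assms(1) by blast
qed

end
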